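(* Let $G=(g_1,\dots,g_k)\in\mathbb{N}_0^k$ be telescopic with $g_1>0$, $c(G)=(c_2,\dots,c_k)$ and $\gcd(G)=d$, and suppose $g_n=c_mg_m$ for some $1<n<m\le k$. Then $g_n=z_nC_{n,k}$ where $z_n$ is a non-negative multiple of $d$ with $\gcd(z_n/d,c_n)=1$; moreover $\gcd(z_n/d,c_m)=1$, and $\gcd(c_j,c_m)=1$ for all $j$ with $n<j<m$.
   Context: $\langle\cdot\rangle$ denotes the set of $\mathbb{N}_0$-linear combinations. $G_i=(g_1,\dots,g_i)$, $d_i=\gcd(G_i)$, $c_j=d_{j-1}/d_j$; $G$ is telescopic if $c_jg_j\in\langle G_{j-1}\rangle$ for all $2\le j\le k$. $C_{a,b}=\prod_{j=a+1}^b c_j$, with the empty product equal to $1$. *)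

theory Defs
  imports Main
begin

text \<open>A sequence G = (g_1,...,g_k) of non-negative integers is represented by a
function g :: nat => nat, of which only the values g 1, ..., g k matter.\<close>

definition dseq :: "(nat \<Rightarrow> nat) \<Rightarrow> nat \<Rightarrow> nat" where
  "dseq g i = Gcd (g ` {1..i})"

definition cseq :: "(nat \<Rightarrow> nat) \<Rightarrow> nat \<Rightarrow> nat" where
  "cseq g j = dseq g (j - 1) div dseq g j"

definition lincomb :: "(nat \<Rightarrow> nat) \<Rightarrow> nat \<Rightarrow> nat set" where
  "lincomb g i = {x. \<exists>a :: nat \<Rightarrow> nat. x = (\<Sum>l = 1..i. a l * g l)}"

definition telescopic :: "(nat \<Rightarrow> nat) \<Rightarrow> nat \<Rightarrow> bool" where
  "telescopic g k \<longleftrightarrow> (\<forall>j. 2 \<le> j \<and> j \<le> k \<longrightarrow> cseq g j * g j \<in> lincomb g (j - 1))"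

definition Cprod :: "(nat \<Rightarrow> nat) \<Rightarrow> nat \<Rightarrow> nat \<Rightarrow> nat" where
  "Cprod g a b = (\<Prod>j = a + 1..b. cseq g j)"

end

theory Submission
  imports Defs
begin

text \<open>Since d_m = gcd(d_(m-1), g_m) and d_(m-1) = c_m d_m, the cofactor y = g_m / d_m is
  coprime to c_m, and g_n = c_m g_m = d_(m-1) y. As d_(m-1) divides d_n, which divides g_n,
  this splits y = (g_n / d_n) (d_n / d_(m-1)). The first factor is z_n / d, because
  d_n = d C_(n,k); the second is divisible by every c_j with n < j < m. So all claimed
  coprimalities follow from gcd(y, c_m) = 1, except gcd(z_n / d, c_n) = 1, which is the same
  cofactor argument at index n.\<close>

lemma dseq_Suc: "dseq g (Suc i) = gcd (dseq g i) (g (Suc i))"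
proof -
  have "{1..Suc i} = insert (Suc i) {1..i}" by auto
  then show ?thesis unfolding dseq_def by (simp add: gcd.commute)
qed

lemma dseq_dvd: "1 \<le> l \<Longrightarrow> l \<le> i \<Longrightarrow> dseq g i dvd g l"
  unfolding dseq_def by (rule Gcd_dvd) auto

lemma dseq_dvd_dseq: "i \<le> j \<Longrightarrow> dseq g j dvd dseq g i"
  unfolding dseq_def by (rule Gcd_greatest) (auto intro: Gcd_dvd)

lemma dseq_pos: "0 < g 1 \<Longrightarrow> 1 \<le> i \<Longrightarrow> 0 < dseq g i"
  using dseq_dvd[of 1 i g] by (auto intro: Nat.gr0I)

lemma cseq_mult_dseq: "cseq g j * dseq g j = dseq g (j - 1)"
  unfolding cseq_def by (simp add: dseq_dvd_dseq)

lemma dseq_eq_mult_Cprod: "a \<le> b \<Longrightarrow> dseq g a = dseq g b * Cprod g a b"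
proof (induction b)
  case 0
  then show ?case by (simp add: Cprod_def)
next
  case (Suc b)
  show ?case
  proof (cases "a = Suc b")
    case True
    then show ?thesis by (simp add: Cprod_def)
  next
    case False
    then have "a \<le> b" using Suc.prems by simp
    moreover have "Cprod g a (Suc b) = Cprod g a b * cseq g (Suc b)"
      using \<open>a \<le> b\<close> by (simp add: Cprod_def)
    ultimately show ?thesis
      using Suc.IH cseq_mult_dseq[of g "Suc b"] by (simp add: mult_ac)
  qed
qed

lemma coprime_cseq_div_dseq:
  assumes "1 \<le> j" and "dseq g j \<noteq> 0"
  shows "coprime (cseq g j) (g j div dseq g j)"
proof -
  have d: "dseq g j = gcd (dseq g (j - 1)) (g j)"
    using dseq_Suc[of g "j - 1"] assms(1) by simp
  then have "coprime (dseq g (j - 1) div dseq g j) (g j div dseq g j)"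
    using assms(2) by (simp add: div_gcd_coprime)
  then show ?thesis unfolding cseq_def .
qed

lemma div_dseq_mult_div_dseq:
  assumes "0 < g 1" and "1 \<le> n" and "n < m" and "g n = cseq g m * g m"
  shows "(g n div dseq g n) * (dseq g n div dseq g (m - 1)) = g m div dseq g m"
proof -
  have D_pos: "0 < dseq g (m - 1)" using dseq_pos assms by simp
  have "g m = dseq g m * (g m div dseq g m)"
    using dseq_dvd[of m m g] assms(2,3) by simp
  then have "g n = dseq g (m - 1) * (g m div dseq g m)"
    using assms(4) cseq_mult_dseq[of g m] by (metis mult.assoc)
  moreover have "(g n div dseq g n) * (dseq g n div dseq g (m - 1)) * dseq g (m - 1) = g n"
    using dseq_dvd[of n n g] dseq_dvd_dseq[of n "m - 1" g] assms(2,3) by (simp add: mult.assoc)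
  ultimately show ?thesis using D_pos by (metis mult.commute mult_cancel_left gr_implies_not0)
qed

lemma cseq_dvd_dseq_div_dseq:
  assumes "n < j" and "j < m"
  shows "cseq g j dvd dseq g n div dseq g (m - 1)"
proof (cases "dseq g (m - 1) = 0")
  case False
  have "dseq g (m - 1) dvd dseq g j" using assms by (simp add: dseq_dvd_dseq)
  then have "cseq g j * dseq g (m - 1) dvd dseq g (j - 1)"
    by (metis cseq_mult_dseq mult_dvd_mono dvd_refl)
  also have "dseq g (j - 1) dvd dseq g n" using assms by (simp add: dseq_dvd_dseq)
  finally show ?thesis
    using False assms by (simp add: dvd_div_iff_mult dseq_dvd_dseq)
qed simp

theorem mainTheorem20:
  fixes g :: "nat \<Rightarrow> nat" and k n m :: nat
  assumes "telescopic g k"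
    and "g 1 > 0"
    and "1 < n" and "n < m" and "m \<le> k"
    and "g n = cseq g m * g m"
  shows "\<exists>z :: nat. g n = z * Cprod g n k
           \<and> dseq g k dvd z
           \<and> coprime (z div dseq g k) (cseq g n)
           \<and> coprime (z div dseq g k) (cseq g m)
           \<and> (\<forall>j. n < j \<and> j < m \<longrightarrow> coprime (cseq g j) (cseq g m))"
proof -
  define y where "y = g m div dseq g m"
  define q where "q = g n div dseq g n"
  define t where "t = dseq g n div dseq g (m - 1)"
  have split: "q * t = y"
    unfolding q_def t_def y_def using div_dseq_mult_div_dseq assms by simp
  have coprime_y: "coprime (cseq g m) y"
    unfolding y_def using coprime_cseq_div_dseq dseq_pos assms by simp
  have "g n = q * dseq g n"
    unfolding q_def using dseq_dvd[of n n g] assms by simp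
  then have "g n = (dseq g k * q) * Cprod g n k"
    using dseq_eq_mult_Cprod[of n k g] assms by (simp add: mult_ac)
  moreover have "dseq g k * q div dseq g k = q"
    using dseq_pos assms by simp
  moreover have "coprime q (cseq g n)"
    unfolding q_def using coprime_cseq_div_dseq[of n g] dseq_pos[of g n] assms(2,3)
    by (simp add: coprime_commute)
  moreover have "coprime q (cseq g m)"
    using coprime_y unfolding split[symmetric] by (simp add: coprime_commute)
  moreover have "coprime (cseq g j) (cseq g m)" if "n < j" "j < m" for j
  proof -
    have "cseq g j dvd y"
      unfolding split[symmetric] t_def using cseq_dvd_dseq_div_dseq that by simp
    then show ?thesis using coprime_y coprime_divisors by (metis coprime_commute dvd_refl)
  qed
  ultimately show ?thesis by (intro exI[of _ "dseq g k * q"]) simp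
qed

end
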